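(* Let $n\ge3$, let $\mathcal{U}=[k]$ be finite, let $\{\mathbf{p}_u\}_{u\in\mathcal{U}}$ be a probability table with every $\mathbf{p}_u\in(0,1)^n$ and $\sum_ip_u^{(i)}=1$, let $d$ be a probability distribution on $\mathcal{U}$, and let $E=\{(C^{(1)},C^{(2)}),(C^{(2)},C^{(3)}),\dots,(C^{(n-1)},C^{(n)}),(C^{(n)},C^{(1)})\}$. Then there exists a probability distribution $w$ on the set $\mathcal{R}$ of permutations of $[n]$ such that $f_d(e)=\sum_{r\in\mathcal{R}}w(r)f_r(e)$ for every $e\in E$.
   Context: $f_d(C^{(i)},C^{(j)})=\sum_u d(u)\,p_u^{(i)}/(p_u^{(i)}+p_u^{(j)})$ are the expert graph weights (here an expert cycle on $E$). For a permutation $r=(r_1,\dots,r_n)$, $f_r(C^{(r_a)},C^{(r_b)})=1$ if $a<b$ and $0$ if $a>b$ (ranking graph weights). *)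

theory Defs
  imports Complex_Main "HOL-Combinatorics.Permutations"
begin

text \<open>Candidates are C^(1),...,C^(n), identified with 1..n. Voter types U = {1..k}.
  p u i = p_u^(i), d u = d(u).\<close>

definition expert_weight :: "nat set \<Rightarrow> (nat \<Rightarrow> real) \<Rightarrow> (nat \<Rightarrow> nat \<Rightarrow> real) \<Rightarrow> nat \<Rightarrow> nat \<Rightarrow> real" where
  "expert_weight U d p i j = (\<Sum>u\<in>U. d u * p u i / (p u i + p u j))"

text \<open>A ranking r = (r_1,...,r_n) is a permutation r of {1..n}, with r a = r_a the
  candidate in position a. f_r(C^(r_a), C^(r_b)) = 1 iff a < b, i.e. candidate i
  precedes candidate j iff inv r i < inv r j.\<close>

definition rank_weight :: "(nat \<Rightarrow> nat) \<Rightarrow> nat \<Rightarrow> nat \<Rightarrow> real" where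
  "rank_weight r i j = (if inv r i < inv r j then 1 else 0)"

definition cycle_edges :: "nat \<Rightarrow> (nat \<times> nat) set" where
  "cycle_edges n = {(i, Suc i) | i. 1 \<le> i \<and> i < n} \<union> {(n, 1)}"

end

theory Submission
  imports Defs "HOL-Combinatorics.Multiset_Permutations"
begin

text \<open>For each voter type \<open>u\<close> take the Plackett-Luce distribution on rankings: candidates are
  drawn one after another without replacement, each with probability proportional to
  \<open>p u\<close>. Under it, candidate \<open>i\<close> precedes candidate \<open>j\<close> with probability
  \<open>p u i / (p u i + p u j)\<close>, for every pair \<open>i \<noteq> j\<close>, and the \<open>d\<close>-mixture of these
  distributions is the required \<open>w\<close>.\<close>

fun plackett_luce :: "('a \<Rightarrow> real) \<Rightarrow> 'a list \<Rightarrow> real" where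
  "plackett_luce p [] = 1"
| "plackett_luce p (x # xs) = p x / (p x + sum_list (map p xs)) * plackett_luce p xs"

fun precedes :: "'a list \<Rightarrow> 'a \<Rightarrow> 'a \<Rightarrow> real" where
  "precedes [] i j = 0"
| "precedes (x # xs) i j = (if x = i then 1 else if x = j then 0 else precedes xs i j)"

lemma plackett_luce_nonneg:
  assumes "\<forall>x\<in>set xs. p x > 0"
  shows "plackett_luce p xs \<ge> 0"
  using assms
proof (induction xs)
  case Nil
  then show ?case by simp
next
  case (Cons x xs)
  have "sum_list (map p xs) \<ge> 0"
    using Cons.prems by (intro sum_list_nonneg) auto
  with Cons show ?case
    by (auto intro!: mult_nonneg_nonneg divide_nonneg_pos)
qed

lemma sum_permutations_of_set_nonempty:
  assumes "finite A" "A \<noteq> {}"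
  shows "(\<Sum>xs\<in>permutations_of_set A. f xs)
       = (\<Sum>x\<in>A. \<Sum>ys\<in>permutations_of_set (A - {x}). f (x # ys))"
proof -
  have "(\<Sum>xs\<in>permutations_of_set A. f xs)
      = (\<Sum>x\<in>A. \<Sum>xs\<in>(#) x ` permutations_of_set (A - {x}). f xs)"
    unfolding permutations_of_set_nonempty[OF assms(2)]
    by (rule sum.UNION_disjoint) (auto simp: assms)
  also have "\<dots> = (\<Sum>x\<in>A. \<Sum>ys\<in>permutations_of_set (A - {x}). f (x # ys))"
    by (rule sum.cong[OF refl]) (simp add: sum.reindex inj_on_def)
  finally show ?thesis .
qed

lemma plackett_luce_Cons_permutation:
  assumes "finite A" "x \<in> A" "ys \<in> permutations_of_set (A - {x})"
  shows "plackett_luce p (x # ys) = p x / sum p A * plackett_luce p ys"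
proof -
  have "sum_list (map p ys) = sum p (A - {x})"
    using assms(3) by (auto simp: permutations_of_set_def sum_list_distinct_conv_sum_set)
  then have "p x + sum_list (map p ys) = sum p A"
    using sum.remove[OF assms(1,2), of p] by simp
  then show ?thesis by simp
qed

lemma sum_plackett_luce:
  assumes "finite A" "\<forall>x\<in>A. p x > 0"
  shows "(\<Sum>xs\<in>permutations_of_set A. plackett_luce p xs) = 1"
  using assms
proof (induction "card A" arbitrary: A)
  case 0
  then show ?case by simp
next
  case (Suc m)
  then have "A \<noteq> {}" by auto
  have "(\<Sum>xs\<in>permutations_of_set A. plackett_luce p xs)
      = (\<Sum>x\<in>A. \<Sum>ys\<in>permutations_of_set (A - {x}). p x / sum p A * plackett_luce p ys)"
    unfolding sum_permutations_of_set_nonempty[OF Suc.prems(1) \<open>A \<noteq> {}\<close>]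
    by (intro sum.cong refl) (simp only: plackett_luce_Cons_permutation[OF Suc.prems(1)])
  also have "\<dots> = (\<Sum>x\<in>A. p x / sum p A)"
  proof (intro sum.cong refl)
    fix x assume "x \<in> A"
    then have "(\<Sum>ys\<in>permutations_of_set (A - {x}). plackett_luce p ys) = 1"
      using Suc by (intro Suc.hyps) auto
    then show "(\<Sum>ys\<in>permutations_of_set (A - {x}). p x / sum p A * plackett_luce p ys) = p x / sum p A"
      by (simp only: sum_distrib_left[symmetric] mult_1_right)
  qed
  also have "\<dots> = 1"
    using Suc.prems \<open>A \<noteq> {}\<close> sum_pos[of A p] by (simp add: sum_divide_distrib[symmetric])
  finally show ?case .
qed

text \<open>The first element drawn is \<open>i\<close> or \<open>j\<close> with probabilities proportional to \<open>p i\<close>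
  and \<open>p j\<close>; otherwise the question is decided by the remaining draws, and induction
  gives \<open>q = p i / (p i + p j)\<close> there.\<close>

lemma plackett_luce_precedes:
  assumes "finite A" "\<forall>x\<in>A. p x > 0" "i \<in> A" "j \<in> A" "i \<noteq> j"
  shows "(\<Sum>xs\<in>permutations_of_set A. plackett_luce p xs * precedes xs i j) = p i / (p i + p j)"
  using assms
proof (induction "card A" arbitrary: A)
  case 0
  then show ?case by simp
next
  case (Suc m)
  define q where "q = p i / (p i + p j)"
  define g where "g x = (if x = i then 1 else if x = j then 0 else q)" for x
  have "A \<noteq> {}" and S: "sum p A > 0"
    using Suc.prems sum_pos[of A p] by auto
  have first_draw: "(\<Sum>ys\<in>permutations_of_set (A - {x}). plackett_luce p ys * precedes (x # ys) i j)
      = g x" if "x \<in> A" for x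
  proof (cases "x = i \<or> x = j")
    case True
    then show ?thesis
      using Suc.prems sum_plackett_luce[of "A - {x}" p] by (auto simp: g_def)
  next
    case False
    have "(\<Sum>ys\<in>permutations_of_set (A - {x}). plackett_luce p ys * precedes ys i j) = q"
      unfolding q_def using Suc that False by (intro Suc.hyps) auto
    with False show ?thesis by (simp add: g_def)
  qed
  have "(\<Sum>xs\<in>permutations_of_set A. plackett_luce p xs * precedes xs i j)
      = (\<Sum>x\<in>A. \<Sum>ys\<in>permutations_of_set (A - {x}).
           p x / sum p A * (plackett_luce p ys * precedes (x # ys) i j))"
    unfolding sum_permutations_of_set_nonempty[OF Suc.prems(1) \<open>A \<noteq> {}\<close>]
    by (intro sum.cong refl) (simp only: plackett_luce_Cons_permutation[OF Suc.prems(1)] mult.assoc)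
  also have "\<dots> = (\<Sum>x\<in>A. p x / sum p A * g x)"
    by (intro sum.cong refl) (simp only: sum_distrib_left[symmetric] first_draw)
  also have "\<dots> = (\<Sum>x\<in>A. p x / sum p A * q + (if x = i then p i / sum p A * (1 - q) else 0)
                      + (if x = j then - (p j / sum p A * q) else 0))"
    using Suc.prems S by (intro sum.cong refl) (auto simp: g_def field_simps)
  also have "\<dots> = q + p i / sum p A * (1 - q) - p j / sum p A * q"
    using Suc.prems S
    by (simp add: sum.distrib sum_divide_distrib[symmetric] sum_distrib_right[symmetric])
  also have "\<dots> = q"
    using Suc.prems S add_pos_pos[of "p i" "p j"] by (simp add: q_def field_simps)
  finally show ?case by (simp add: q_def)
qed

lemma precedes_nth:
  assumes "distinct xs" "a < length xs" "b < length xs" "a \<noteq> b"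
  shows "precedes xs (xs ! a) (xs ! b) = (if a < b then 1 else 0)"
  using assms
proof (induction xs arbitrary: a b)
  case Nil
  then show ?case by simp
next
  case (Cons x xs)
  show ?case
  proof (cases a; cases b)
    fix a' b' assume "a = Suc a'" "b = Suc b'"
    then have "xs ! a' \<noteq> x" "xs ! b' \<noteq> x"
      using Cons.prems by (auto simp: nth_mem)
    with Cons.IH[of a' b'] Cons.prems \<open>a = Suc a'\<close> \<open>b = Suc b'\<close> show ?thesis by auto
  qed (use Cons.prems in \<open>auto simp: nth_mem\<close>)
qed

lemma bij_betw_permutes_permutations_of_set:
  assumes "distinct xs"
  shows "bij_betw (\<lambda>r. map r xs) {r. r permutes set xs} (permutations_of_set (set xs))"
proof -
  let ?S = "{r. r permutes set xs}"
  have inj: "inj_on (\<lambda>r. map r xs) ?S"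
  proof (rule inj_onI)
    fix r r' assume r: "r \<in> ?S" and r': "r' \<in> ?S" and eq: "map r xs = map r' xs"
    have "r x = r' x" for x
    proof (cases "x \<in> set xs")
      case True
      with eq show ?thesis by (simp add: map_eq_conv)
    next
      case False
      with r r' show ?thesis by (simp add: permutes_not_in)
    qed
    then show "r = r'" ..
  qed
  have "xs \<in> permutations_of_set (set xs)"
    using assms by auto
  then have "map r xs \<in> permutations_of_set (set xs)" if "r \<in> ?S" for r
    using that permutations_of_set_image_permutes[of r "set xs"] by blast
  moreover have "card ((\<lambda>r. map r xs) ` ?S) = card (permutations_of_set (set xs))"
    by (simp add: card_image[OF inj] card_permutations)
  ultimately have "(\<lambda>r. map r xs) ` ?S = permutations_of_set (set xs)"
    by (intro card_subset_eq) auto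
  with inj show ?thesis by (simp add: bij_betw_def)
qed

definition ranking_list :: "nat \<Rightarrow> (nat \<Rightarrow> nat) \<Rightarrow> nat list" where
  "ranking_list n r = map r [1..<Suc n]"

lemma sum_permutes_ranking_list:
  "(\<Sum>r\<in>{r. r permutes {1..n}}. f (ranking_list n r)) = (\<Sum>xs\<in>permutations_of_set {1..n}. f xs)"
  using sum.reindex_bij_betw[OF bij_betw_permutes_permutations_of_set[of "[1..<Suc n]"], of f]
  by (simp add: ranking_list_def atLeastLessThanSuc_atLeastAtMost del: upt_Suc)

lemma rank_weight_eq_precedes:
  assumes r: "r permutes {1..n}" and "i \<in> {1..n}" "j \<in> {1..n}" "i \<noteq> j"
  shows "rank_weight r i j = precedes (ranking_list n r) i j"
proof -
  let ?xs = "ranking_list n r"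
  have pos: "inv r i \<in> {1..n}" "inv r j \<in> {1..n}"
    using permutes_in_image[OF permutes_inv[OF r]] assms by auto
  have at_pos: "?xs ! (inv r i - 1) = i" "?xs ! (inv r j - 1) = j"
    using pos permutes_inverses(1)[OF r] by (auto simp: ranking_list_def simp del: upt_Suc)
  have "distinct ?xs"
    using permutes_inj_on[OF r] by (simp add: ranking_list_def distinct_map inj_on_subset)
  moreover have "inv r i - 1 \<noteq> inv r j - 1"
    using at_pos \<open>i \<noteq> j\<close> by metis
  ultimately have "precedes ?xs (?xs ! (inv r i - 1)) (?xs ! (inv r j - 1))
      = (if inv r i - 1 < inv r j - 1 then 1 else 0)"
    using pos by (intro precedes_nth) (auto simp: ranking_list_def simp del: upt_Suc)
  with pos show ?thesis
    unfolding at_pos by (auto simp: rank_weight_def)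
qed

definition mixed_plackett_luce ::
    "nat set \<Rightarrow> (nat \<Rightarrow> real) \<Rightarrow> (nat \<Rightarrow> nat \<Rightarrow> real) \<Rightarrow> nat \<Rightarrow> (nat \<Rightarrow> nat) \<Rightarrow> real" where
  "mixed_plackett_luce U d p n r = (\<Sum>u\<in>U. d u * plackett_luce (p u) (ranking_list n r))"

locale voter_profile =
  fixes U :: "nat set" and d :: "nat \<Rightarrow> real" and p :: "nat \<Rightarrow> nat \<Rightarrow> real" and n :: nat
  assumes p_pos: "\<And>u i. u \<in> U \<Longrightarrow> i \<in> {1..n} \<Longrightarrow> p u i > 0"
    and d_nonneg: "\<And>u. u \<in> U \<Longrightarrow> d u \<ge> 0"
begin

lemma mixed_plackett_luce_nonneg:
  assumes "r permutes {1..n}"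
  shows "mixed_plackett_luce U d p n r \<ge> 0"
proof -
  have "set (ranking_list n r) = {1..n}"
    using permutes_image[OF assms]
    by (simp add: ranking_list_def atLeastLessThanSuc_atLeastAtMost del: upt_Suc)
  then have "plackett_luce (p u) (ranking_list n r) \<ge> 0" if "u \<in> U" for u
    using p_pos[OF that] by (intro plackett_luce_nonneg) simp
  then show ?thesis
    unfolding mixed_plackett_luce_def by (intro sum_nonneg mult_nonneg_nonneg d_nonneg)
qed

lemma sum_mixed_plackett_luce:
  "(\<Sum>r\<in>{r. r permutes {1..n}}. mixed_plackett_luce U d p n r) = sum d U"
proof -
  have "(\<Sum>r\<in>{r. r permutes {1..n}}. mixed_plackett_luce U d p n r)
      = (\<Sum>u\<in>U. d u * (\<Sum>xs\<in>permutations_of_set {1..n}. plackett_luce (p u) xs))"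
    unfolding mixed_plackett_luce_def sum_permutes_ranking_list[symmetric]
    by (subst sum.swap) (simp add: sum_distrib_left)
  also have "\<dots> = sum d U"
    using p_pos by (simp add: sum_plackett_luce)
  finally show ?thesis .
qed

lemma expert_weight_eq_mixed_plackett_luce:
  assumes "i \<in> {1..n}" "j \<in> {1..n}" "i \<noteq> j"
  shows "expert_weight U d p i j
       = (\<Sum>r\<in>{r. r permutes {1..n}}. mixed_plackett_luce U d p n r * rank_weight r i j)"
proof -
  have "(\<Sum>r\<in>{r. r permutes {1..n}}. mixed_plackett_luce U d p n r * rank_weight r i j)
      = (\<Sum>r\<in>{r. r permutes {1..n}}. \<Sum>u\<in>U.
           d u * (plackett_luce (p u) (ranking_list n r) * precedes (ranking_list n r) i j))"
    using assms
    by (intro sum.cong refl)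
      (simp add: mixed_plackett_luce_def rank_weight_eq_precedes sum_distrib_right mult.assoc)
  also have "\<dots> = (\<Sum>u\<in>U. d u *
      (\<Sum>xs\<in>permutations_of_set {1..n}. plackett_luce (p u) xs * precedes xs i j))"
    unfolding sum_permutes_ranking_list[symmetric] by (subst sum.swap) (simp add: sum_distrib_left)
  also have "\<dots> = expert_weight U d p i j"
    using assms p_pos by (simp add: plackett_luce_precedes expert_weight_def)
  finally show ?thesis by simp
qed

end

theorem lemma16:
  fixes n k :: nat and p :: "nat \<Rightarrow> nat \<Rightarrow> real" and d :: "nat \<Rightarrow> real"
  assumes n3: "n \<ge> 3"
    and p_pos: "\<And>u i. u \<in> {1..k} \<Longrightarrow> i \<in> {1..n} \<Longrightarrow> 0 < p u i \<and> p u i < 1"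
    and p_sum: "\<And>u. u \<in> {1..k} \<Longrightarrow> (\<Sum>i=1..n. p u i) = 1"
    and d_nonneg: "\<And>u. u \<in> {1..k} \<Longrightarrow> d u \<ge> 0"
    and d_sum: "(\<Sum>u=1..k. d u) = 1"
  shows "\<exists>w :: (nat \<Rightarrow> nat) \<Rightarrow> real.
           (\<forall>r \<in> {r. r permutes {1..n}}. w r \<ge> 0)
         \<and> (\<Sum>r \<in> {r. r permutes {1..n}}. w r) = 1
         \<and> (\<forall>(i, j) \<in> cycle_edges n.
              expert_weight {1..k} d p i j
                = (\<Sum>r \<in> {r. r permutes {1..n}}. w r * rank_weight r i j))"
proof -
  interpret voter_profile "{1..k}" d p n
    using p_pos d_nonneg by unfold_locales auto
  have edge: "i \<in> {1..n} \<and> j \<in> {1..n} \<and> i \<noteq> j" if "(i, j) \<in> cycle_edges n" for i j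
    using that n3 by (auto simp: cycle_edges_def)
  show ?thesis
    using mixed_plackett_luce_nonneg sum_mixed_plackett_luce d_sum
      expert_weight_eq_mixed_plackett_luce edge
    by (intro exI[of _ "mixed_plackett_luce {1..k} d p n"]) auto
qed

end
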